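(* Let $\boldsymbol{G}$ be a $k\times n$ binary generator matrix of full rank $k$ of a binary $(n,k)$ linear block code $\mathcal{C}$, and let $\boldsymbol{b}^{(1)},\dots,\boldsymbol{b}^{(2^k)}$ be an enumeration of all of $\{0,1\}^k$, with $\boldsymbol{c}^{(j)}=\boldsymbol{b}^{(j)}\boldsymbol{G}$ (over $\mathrm{GF}(2)$), so $\mathcal{C}=\{\boldsymbol{c}^{(1)},\dots,\boldsymbol{c}^{(2^k)}\}$. Let $\sigma^2>0$ be the channel noise variance. Consider a three-layer neural network (no biases) with $n$ input neurons, $2^k$ hidden neurons and $k$ output neurons, where: (i) the $n\times 2^k$ binary weight matrix $\boldsymbol{W}^{(1)}$ from input to hidden layer has $j$-th column $\boldsymbol{c}^{(j)}$; (ii) the hidden layer applies the scaled softmax activation with scaling factor $\alpha=2/\sigma^2$, i.e. given pre-activations $x_1,\dots,x_{2^k}$ it outputs $h_j=\exp(\alpha x_j)/\sum_{l=1}^{2^k}\exp(\alpha x_l)$; (iii) the $2^k\times k$ binary weight matrix $\boldsymbol{W}^{(2)}$ from hidden to output layer has $j$-th row $\boldsymbol{b}^{(j)}$, and the output neurons compute $\boldsymbol{h}\boldsymbol{W}^{(2)}$; (iv) the decision on the $i$-th information bit is obtained by thresholding the $i$-th output at $1/2$: $\hat b_i=1$ if the output exceeds $1/2$ and $\hat b_i=0$ if it is below $1/2$. Then, for a received vector $\boldsymbol{r}\in\mathbb{R}^n$ (row vector, input as $\boldsymbol{r}\boldsymbol{W}^{(1)}$ to the hidden layer), this network realizes bit-wise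 maximum likelihood (equivalently, under the uniform prior, bit-wise maximum a posteriori) decoding of the information bits, i.e. $\hat b_i\in\mathop{\mathrm{argmax}}_{b\in\{0,1\}} P(b_i=b\mid\boldsymbol{r})$ for each $i=1,\dots,k$. No training is required.
   Context: Transmission model: the information vector $\boldsymbol{b}=(b_1,\dots,b_k)$ has i.i.d. uniform bits and is encoded to $\boldsymbol{c}=\boldsymbol{b}\boldsymbol{G}$; the code bits are mapped to BPSK symbols $s_i=2c_i-1\in\{-1,1\}$ and sent over a binary-input additive white Gaussian noise channel: the receiver observes $\boldsymbol{r}=\boldsymbol{s}+\boldsymbol{w}$ with $w_1,\dots,w_n$ i.i.d. zero-mean Gaussian of variance $\sigma^2$, so $p(\boldsymbol{r}\mid\boldsymbol{c})=\prod_{i=1}^n \frac{1}{\sqrt{2\pi\sigma^2}}\exp\!\big(-\frac{(r_i-(2c_i-1))^2}{2\sigma^2}\big)$. Bit-wise MAP/ML decoding chooses, for each bit position $i$, the value $b\in\{0,1\}$ maximizing the posterior probability $P(b_i=b\mid\boldsymbol{r})$ (equivalently the likelihood $p(\boldsymbol{r}\mid b_i=b)$, since bits are uniform); ties may be broken arbitrarily. *)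

theory Defs
  imports Complex_Main
begin

text \<open>Binary vectors of length m, represented as functions nat => nat with entries in {0,1}
  at positions < m and 0 elsewhere (so that distinct vectors are distinct functions).\<close>
definition bitvecs :: "nat \<Rightarrow> (nat \<Rightarrow> nat) set" where
  "bitvecs m = {b. (\<forall>i<m. b i \<in> {0,1}) \<and> (\<forall>i\<ge>m. b i = 0)}"

definition binary_matrix :: "nat \<Rightarrow> nat \<Rightarrow> (nat \<Rightarrow> nat \<Rightarrow> nat) \<Rightarrow> bool" where
  "binary_matrix k n G \<longleftrightarrow> (\<forall>i<k. \<forall>t<n. G i t \<in> {0,1})"

definition encode :: "nat \<Rightarrow> nat \<Rightarrow> (nat \<Rightarrow> nat \<Rightarrow> nat) \<Rightarrow> (nat \<Rightarrow> nat) \<Rightarrow> (nat \<Rightarrow> nat)" where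
  "encode k n G b = (\<lambda>t. if t < n then (\<Sum>i<k. b i * G i t) mod 2 else 0)"

definition full_rank_gf2 :: "nat \<Rightarrow> nat \<Rightarrow> (nat \<Rightarrow> nat \<Rightarrow> nat) \<Rightarrow> bool" where
  "full_rank_gf2 k n G \<longleftrightarrow>
     (\<forall>b\<in>bitvecs k. (\<forall>t<n. (\<Sum>i<k. b i * G i t) mod 2 = 0) \<longrightarrow> (\<forall>i<k. b i = 0))"

definition awgn_lik :: "nat \<Rightarrow> real \<Rightarrow> (nat \<Rightarrow> real) \<Rightarrow> (nat \<Rightarrow> nat) \<Rightarrow> real" where
  "awgn_lik n sigma2 r c =
     (\<Prod>t<n. (1 / sqrt (2 * pi * sigma2)) *
              exp (- ((r t - (2 * real (c t) - 1))^2) / (2 * sigma2)))"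

definition posterior_bit ::
  "nat \<Rightarrow> nat \<Rightarrow> (nat \<Rightarrow> nat \<Rightarrow> nat) \<Rightarrow> real \<Rightarrow> (nat \<Rightarrow> real) \<Rightarrow> nat \<Rightarrow> nat \<Rightarrow> real" where
  "posterior_bit k n G sigma2 r i v =
     (\<Sum>b\<in>{b\<in>bitvecs k. b i = v}. (1 / 2^k) * awgn_lik n sigma2 r (encode k n G b)) /
     (\<Sum>b\<in>bitvecs k. (1 / 2^k) * awgn_lik n sigma2 r (encode k n G b))"

definition bitwise_MAP_set ::
  "nat \<Rightarrow> nat \<Rightarrow> (nat \<Rightarrow> nat \<Rightarrow> nat) \<Rightarrow> real \<Rightarrow> (nat \<Rightarrow> real) \<Rightarrow> nat \<Rightarrow> nat set" where
  "bitwise_MAP_set k n G sigma2 r i =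
     {v \<in> {0,1}. \<forall>v'\<in>{0,1}. posterior_bit k n G sigma2 r i v' \<le> posterior_bit k n G sigma2 r i v}"

text \<open>Network. W1 (n x 2^k) has j-th column c^(j) = encode (benum j); the hidden
  pre-activations are x = r W1.\<close>
definition hidden_preact ::
  "nat \<Rightarrow> nat \<Rightarrow> (nat \<Rightarrow> nat \<Rightarrow> nat) \<Rightarrow> (nat \<Rightarrow> nat \<Rightarrow> nat) \<Rightarrow> (nat \<Rightarrow> real) \<Rightarrow> nat \<Rightarrow> real" where
  "hidden_preact k n G benum r j = (\<Sum>t<n. r t * real (encode k n G (benum j) t))"

definition scaled_softmax :: "real \<Rightarrow> nat \<Rightarrow> (nat \<Rightarrow> real) \<Rightarrow> nat \<Rightarrow> real" where
  "scaled_softmax alpha N x j = exp (alpha * x j) / (\<Sum>l<N. exp (alpha * x l))"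

text \<open>Output neuron i: (h W2)_i where W2 (2^k x k) has j-th row benum j.\<close>
definition net_output ::
  "nat \<Rightarrow> nat \<Rightarrow> (nat \<Rightarrow> nat \<Rightarrow> nat) \<Rightarrow> (nat \<Rightarrow> nat \<Rightarrow> nat) \<Rightarrow> real \<Rightarrow> (nat \<Rightarrow> real) \<Rightarrow> nat \<Rightarrow> real" where
  "net_output k n G benum sigma2 r i =
     (\<Sum>j<2^k. scaled_softmax (2 / sigma2) (2^k) (hidden_preact k n G benum r) j
               * real (benum j i))"

end

theory Submission
  imports Defs
begin

text \<open>Expanding the square, the Gaussian likelihood of a BPSK codeword c factors as the
  likelihood of the all-zero codeword times exp((2/\<sigma>^2) \<langle>r, c\<rangle>). Hence the scaled softmax of
  the correlations r W1 is exactly the posterior distribution of the transmitted information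
  vector, and the network output for bit i is the posterior probability that b_i = 1.
  Thresholding a probability of a binary event at 1/2 picks the more likely value.\<close>

lemma bpsk_exponent_split:
  fixes x s :: real and c :: nat
  assumes "c \<in> {0,1}" "s > 0"
  shows "exp (- ((x - (2 * real c - 1))^2) / (2 * s)) =
         exp (- ((x + 1)^2) / (2 * s)) * exp ((2 / s) * (x * real c))"
proof -
  have "- ((x - (2 * real c - 1))^2) / (2 * s) = - ((x + 1)^2) / (2 * s) + (2 / s) * (x * real c)"
    using assms by (auto simp: field_simps power2_eq_square)
  then show ?thesis by (simp only: exp_add[symmetric])
qed

lemma awgn_lik_eq_zero_codeword_mult_exp:
  assumes "\<And>t. t < n \<Longrightarrow> c t \<in> {0,1}" "s > 0"
  shows "awgn_lik n s r c = awgn_lik n s r (\<lambda>_. 0) * exp ((2 / s) * (\<Sum>t<n. r t * real (c t)))"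
proof -
  have "awgn_lik n s r c = (\<Prod>t<n. (1 / sqrt (2 * pi * s) * exp (- ((r t + 1)^2) / (2 * s)))
        * exp ((2 / s) * (r t * real (c t))))"
    unfolding awgn_lik_def using bpsk_exponent_split[OF assms(1) assms(2)]
    by (intro prod.cong) simp_all
  also have "\<dots> = (\<Prod>t<n. 1 / sqrt (2 * pi * s) * exp (- ((r t + 1)^2) / (2 * s)))
        * (\<Prod>t<n. exp ((2 / s) * (r t * real (c t))))"
    by (rule prod.distrib)
  also have "(\<Prod>t<n. 1 / sqrt (2 * pi * s) * exp (- ((r t + 1)^2) / (2 * s))) =
      awgn_lik n s r (\<lambda>_. 0)"
    unfolding awgn_lik_def by simp
  also have "(\<Prod>t<n. exp ((2 / s) * (r t * real (c t)))) =
      exp ((2 / s) * (\<Sum>t<n. r t * real (c t)))"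
    by (simp add: exp_sum sum_distrib_left)
  finally show ?thesis .
qed

lemma awgn_lik_pos: "s > 0 \<Longrightarrow> awgn_lik n s r c > 0"
  unfolding awgn_lik_def by (intro prod_pos) simp

lemma encode_binary: "t < n \<Longrightarrow> encode k n G b t \<in> {0,1}"
  unfolding encode_def by auto

definition softmax_weight ::
  "nat \<Rightarrow> nat \<Rightarrow> (nat \<Rightarrow> nat \<Rightarrow> nat) \<Rightarrow> real \<Rightarrow> (nat \<Rightarrow> real) \<Rightarrow> (nat \<Rightarrow> nat) \<Rightarrow> real"
  where "softmax_weight k n G sigma2 r b =
    exp ((2 / sigma2) * (\<Sum>t<n. r t * real (encode k n G b t)))"

lemma posterior_bit_eq_softmax_weights:
  assumes "sigma2 > 0"
  shows "posterior_bit k n G sigma2 r i v =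
    (\<Sum>b\<in>{b\<in>bitvecs k. b i = v}. softmax_weight k n G sigma2 r b) /
    (\<Sum>b\<in>bitvecs k. softmax_weight k n G sigma2 r b)"
proof -
  define C where "C = (1 / 2^k) * awgn_lik n sigma2 r (\<lambda>_. 0)"
  have "C \<noteq> 0"
    unfolding C_def using awgn_lik_pos[OF assms] by (simp add: less_imp_neq[symmetric])
  have "(1 / 2^k) * awgn_lik n sigma2 r (encode k n G b) = C * softmax_weight k n G sigma2 r b" for b
    unfolding C_def softmax_weight_def
    by (simp add: awgn_lik_eq_zero_codeword_mult_exp[OF encode_binary assms])
  then show ?thesis
    using \<open>C \<noteq> 0\<close> by (simp add: posterior_bit_def sum_distrib_left[symmetric])
qed

lemma net_output_eq_softmax_weights:
  assumes "bij_betw benum {..<2^k} (bitvecs k)"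
  shows "net_output k n G benum sigma2 r i =
    (\<Sum>b\<in>bitvecs k. softmax_weight k n G sigma2 r b * real (b i)) /
    (\<Sum>b\<in>bitvecs k. softmax_weight k n G sigma2 r b)"
proof -
  have reindex: "(\<Sum>j<2^k. g (benum j)) = (\<Sum>b\<in>bitvecs k. g b)" for g :: "(nat \<Rightarrow> nat) \<Rightarrow> real"
    using sum.reindex_bij_betw[OF assms] .
  show ?thesis
    unfolding net_output_def scaled_softmax_def hidden_preact_def
      softmax_weight_def[symmetric] reindex sum_divide_distrib
    by (simp add: reindex[of "\<lambda>b. softmax_weight k n G sigma2 r b * real (b i) / _"])
qed

lemma weighted_bit_mean_vs_half:
  fixes w :: "'a \<Rightarrow> real" and \<beta> :: "'a \<Rightarrow> nat"
  assumes "finite B" "\<And>b. b \<in> B \<Longrightarrow> \<beta> b \<in> {0,1}" "\<And>b. b \<in> B \<Longrightarrow> w b \<ge> 0"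
  defines "S v \<equiv> (\<Sum>b\<in>{b\<in>B. \<beta> b = v}. w b) / (\<Sum>b\<in>B. w b)"
    and "m \<equiv> (\<Sum>b\<in>B. w b * real (\<beta> b)) / (\<Sum>b\<in>B. w b)"
  shows "m > 1/2 \<Longrightarrow> S 0 \<le> S 1" and "m < 1/2 \<Longrightarrow> S 1 \<le> S 0"
proof -
  define D where "D = (\<Sum>b\<in>B. w b)"
  have "B = {b\<in>B. \<beta> b = 0} \<union> {b\<in>B. \<beta> b = 1}"
    using assms(2) by blast
  then have "D = sum w ({b\<in>B. \<beta> b = 0} \<union> {b\<in>B. \<beta> b = 1})"
    unfolding D_def by (rule arg_cong)
  also have "\<dots> = (\<Sum>b\<in>{b\<in>B. \<beta> b = 0}. w b) + (\<Sum>b\<in>{b\<in>B. \<beta> b = 1}. w b)"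
    using \<open>finite B\<close> by (intro sum.union_disjoint) auto
  finally have "D = (\<Sum>b\<in>{b\<in>B. \<beta> b = 0}. w b) + (\<Sum>b\<in>{b\<in>B. \<beta> b = 1}. w b)" .
  then have total: "D \<noteq> 0 \<Longrightarrow> S 0 + S 1 = 1"
    unfolding S_def D_def[symmetric] by (simp add: add_divide_distrib[symmetric])
  have degenerate: "D = 0 \<Longrightarrow> S v = 0" for v
    unfolding S_def D_def[symmetric] by simp
  have "(\<Sum>b\<in>B. w b * real (\<beta> b)) = (\<Sum>b\<in>B. if \<beta> b = 1 then w b else 0)"
    using assms(2) by (intro sum.cong) fastforce+
  also have "\<dots> = (\<Sum>b\<in>{b\<in>B. \<beta> b = 1}. w b)"
    by (rule sum.inter_filter[OF \<open>finite B\<close>, symmetric])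
  finally have "m = S 1"
    unfolding S_def m_def by simp
  show "m > 1/2 \<Longrightarrow> S 0 \<le> S 1" and "m < 1/2 \<Longrightarrow> S 1 \<le> S 0"
    using total degenerate \<open>m = S 1\<close> by (cases "D = 0"; fastforce)+
qed

lemma mem_bitwise_MAP_set_iff:
  "1 \<in> bitwise_MAP_set k n G sigma2 r i \<longleftrightarrow>
     posterior_bit k n G sigma2 r i 0 \<le> posterior_bit k n G sigma2 r i 1"
  "0 \<in> bitwise_MAP_set k n G sigma2 r i \<longleftrightarrow>
     posterior_bit k n G sigma2 r i 1 \<le> posterior_bit k n G sigma2 r i 0"
  unfolding bitwise_MAP_set_def by auto

theorem theorem2:
  fixes k n :: nat and G :: "nat \<Rightarrow> nat \<Rightarrow> nat" and benum :: "nat \<Rightarrow> (nat \<Rightarrow> nat)"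
    and sigma2 :: real and r :: "nat \<Rightarrow> real" and i :: nat
  assumes "binary_matrix k n G"
    and "full_rank_gf2 k n G"
    and "bij_betw benum {..<2^k} (bitvecs k)"
    and "sigma2 > 0"
    and "i < k"
  shows "(net_output k n G benum sigma2 r i > 1/2 \<longrightarrow> 1 \<in> bitwise_MAP_set k n G sigma2 r i)
       \<and> (net_output k n G benum sigma2 r i < 1/2 \<longrightarrow> 0 \<in> bitwise_MAP_set k n G sigma2 r i)"
proof -
  have "finite (bitvecs k)"
    using bij_betw_finite[OF assms(3)] by simp
  moreover have "b i \<in> {0,1}" if "b \<in> bitvecs k" for b
    using that \<open>i < k\<close> by (simp add: bitvecs_def)
  moreover have "softmax_weight k n G sigma2 r b \<ge> 0" for b
    by (simp add: softmax_weight_def)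
  ultimately show ?thesis
    unfolding mem_bitwise_MAP_set_iff posterior_bit_eq_softmax_weights[OF \<open>sigma2 > 0\<close>]
      net_output_eq_softmax_weights[OF assms(3)]
    using weighted_bit_mean_vs_half[where \<beta> = "\<lambda>b. b i"] by blast
qed

end
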